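(* For each $n\ge 2$ and $\ell\ge 2$ there exists a lattice tiling of $\mathbb{Z}^n$ with $\mathcal{S}_{L,K}$, where $L=(\ell,\ell,\dots,\ell)$ and $K=(\ell-1,\ell-1,\dots,\ell-1)$.
   Context: The discrete $n$-dimensional chair is $\mathcal{S}_{L,K}=\{(x_1,\dots,x_n)\in\mathbb{Z}^n: 0\le x_i<\ell_i \text{ for all } i, \text{ and there exists } j \text{ with } x_j<\ell_j-k_j\}$. A lattice is the set of integer combinations of $n$ linearly independent vectors of $\mathbb{Z}^n$; a lattice tiling of $\mathbb{Z}^n$ with a finite $\mathcal{S}\subset\mathbb{Z}^n$ is a lattice $\Lambda$ such that the translates $X+\mathcal{S}$, $X\in\Lambda$, are pairwise disjoint and cover $\mathbb{Z}^n$. *)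

theory Defs
  imports Complex_Main
begin

definition int_space :: "nat \<Rightarrow> int list set" where
  "int_space n = {x. length x = n}"

definition chair :: "nat \<Rightarrow> int list \<Rightarrow> int list \<Rightarrow> int list set" where
  "chair n L K = {x. length x = n \<and> (\<forall>i<n. 0 \<le> x ! i \<and> x ! i < L ! i)
                    \<and> (\<exists>j<n. x ! j < L ! j - K ! j)}"

definition translate :: "int list \<Rightarrow> int list set \<Rightarrow> int list set" where
  "translate X S = (\<lambda>s. map2 (+) X s) ` S"

definition is_lattice :: "nat \<Rightarrow> int list set \<Rightarrow> bool" where
  "is_lattice n \<Lambda> \<longleftrightarrow> (\<exists>b :: nat \<Rightarrow> int list.
      (\<forall>i<n. length (b i) = n) \<and>
      (\<forall>c :: nat \<Rightarrow> real. (\<forall>j<n. (\<Sum>i<n. c i * real_of_int (b i ! j)) = 0)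
          \<longrightarrow> (\<forall>i<n. c i = 0)) \<and>
      \<Lambda> = {map (\<lambda>j. \<Sum>i<n. z i * (b i ! j)) [0..<n] | z :: nat \<Rightarrow> int. True})"

definition lattice_tiling :: "nat \<Rightarrow> int list set \<Rightarrow> int list set \<Rightarrow> bool" where
  "lattice_tiling n \<Lambda> S \<longleftrightarrow> is_lattice n \<Lambda> \<and>
     (\<forall>X\<in>\<Lambda>. \<forall>Y\<in>\<Lambda>. X \<noteq> Y \<longrightarrow> translate X S \<inter> translate Y S = {}) \<and>
     (\<Union>X\<in>\<Lambda>. translate X S) = int_space n"

end

theory Submission
  imports Defs
begin

text \<open>The lattice is spanned by the vectors \<open>l e\<^sub>i - (l - 1) e\<^sub>i\<^sub>+\<^sub>1\<close> (indices modulo \<open>n\<close>),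
  whose determinant \<open>l\<^sup>n - (l - 1)\<^sup>n\<close> is the size of the chair.  The translate of the chair
  by the lattice point with coefficient vector \<open>z\<close> has \<open>j\<close>-th coordinates in
  \<open>[l z\<^sub>j - (l - 1) z\<^sub>j\<^sub>-\<^sub>1, l z\<^sub>j - (l - 1) z\<^sub>j\<^sub>-\<^sub>1 + l)\<close>, with at least one coordinate at the lower end.
  Disjointness: if two translates meet, a maximal positive entry of the difference of the
  coefficient vectors propagates cyclically to all indices, contradicting the zero coordinate.
  Covering: among the lattice points lying componentwise below \<open>x\<close>, one with maximal
  coefficient sum leaves a remainder in the chair, since otherwise some coefficient, or all
  of them, could be increased by one.\<close>

definition cyc_pred :: "nat \<Rightarrow> nat \<Rightarrow> nat" where
  "cyc_pred n j = (if j = 0 then n - 1 else j - 1)"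

definition chair_generator :: "nat \<Rightarrow> int \<Rightarrow> nat \<Rightarrow> int list" where
  "chair_generator n l i =
     map (\<lambda>j. (if j = i then l else 0) - (if i = cyc_pred n j then l - 1 else 0)) [0..<n]"

definition chair_lattice_point :: "nat \<Rightarrow> int \<Rightarrow> (nat \<Rightarrow> int) \<Rightarrow> int list" where
  "chair_lattice_point n l z = map (\<lambda>j. l * z j - (l - 1) * z (cyc_pred n j)) [0..<n]"

lemma cyc_pred_less: "j < n \<Longrightarrow> cyc_pred n j < n"
  unfolding cyc_pred_def by auto

lemma cyc_pred_neq: "2 \<le> n \<Longrightarrow> j < n \<Longrightarrow> cyc_pred n j \<noteq> j"
  unfolding cyc_pred_def by auto

lemma cyc_pred_invariant:
  assumes closed: "\<And>j. j < n \<Longrightarrow> P j \<Longrightarrow> P (cyc_pred n j)"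
    and "j0 < n" "P j0" "j < n"
  shows "P j"
proof -
  have down: "P (i - k)" if "i < n" "P i" "k \<le> i" for i k
    using that(3)
  proof (induction k)
    case (Suc k)
    then have "cyc_pred n (i - k) = i - Suc k"
      by (simp add: cyc_pred_def)
    with Suc closed[of "i - k"] \<open>i < n\<close> show ?case
      by simp
  qed (use that in simp)
  have "P 0"
    using down[of j0 j0] assms by simp
  then have "P (n - 1)"
    using closed[of 0] \<open>j0 < n\<close> by (simp add: cyc_pred_def)
  then show "P j"
    using down[of "n - 1" "n - 1 - j"] \<open>j < n\<close> by simp
qed

lemma sum_cyc_pred:
  fixes f :: "nat \<Rightarrow> 'a::comm_monoid_add"
  assumes "0 < n"
  shows "(\<Sum>j<n. f (cyc_pred n j)) = (\<Sum>j<n. f j)"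
proof -
  obtain m where m: "n = Suc m"
    using assms by (cases n) auto
  have "(\<Sum>j<Suc m. f (cyc_pred n j)) = f (cyc_pred n 0) + (\<Sum>j<m. f (cyc_pred n (Suc j)))"
    by (rule sum.lessThan_Suc_shift)
  also have "\<dots> = (\<Sum>j<Suc m. f j)"
    using m by (simp add: cyc_pred_def add.commute)
  finally show ?thesis
    using m by simp
qed

lemma length_chair_generator: "length (chair_generator n l i) = n"
  by (simp add: chair_generator_def)

lemma length_chair_lattice_point [simp]: "length (chair_lattice_point n l z) = n"
  by (simp add: chair_lattice_point_def)

lemma nth_chair_lattice_point [simp]:
  "j < n \<Longrightarrow> chair_lattice_point n l z ! j = l * z j - (l - 1) * z (cyc_pred n j)"
  by (simp add: chair_lattice_point_def)

lemma sum_chair_generator: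
  fixes f :: "nat \<Rightarrow> 'a::comm_ring_1"
  assumes "2 \<le> n" "j < n"
  shows "(\<Sum>i<n. f i * of_int (chair_generator n l i ! j))
           = f j * of_int l - f (cyc_pred n j) * of_int (l - 1)"
proof -
  have "(\<Sum>i<n. f i * of_int (chair_generator n l i ! j))
          = (\<Sum>i<n. if i = j then f i * of_int l else 0)
            - (\<Sum>i<n. if i = cyc_pred n j then f i * of_int (l - 1) else 0)"
    unfolding sum_subtractf[symmetric]
    using assms cyc_pred_neq[OF assms]
    by (intro sum.cong) (auto simp: chair_generator_def algebra_simps)
  also have "\<dots> = f j * of_int l - f (cyc_pred n j) * of_int (l - 1)"
    using assms cyc_pred_less[OF assms(2)] by simp
  finally show ?thesis .
qed

lemma chair_lattice_eq:
  assumes "2 \<le> n"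
  shows "{map (\<lambda>j. \<Sum>i<n. z i * (chair_generator n l i ! j)) [0..<n] | z :: nat \<Rightarrow> int. True}
           = range (chair_lattice_point n l)"
proof -
  have "map (\<lambda>j. \<Sum>i<n. z i * (chair_generator n l i ! j)) [0..<n] = chair_lattice_point n l z"
    for z
    using sum_chair_generator[OF assms, of _ z l]
    by (auto simp: chair_lattice_point_def mult.commute)
  then show ?thesis
    by auto
qed

text \<open>At an index where \<open>\<bar>c\<^sub>j\<bar>\<close> is maximal, with value \<open>A\<close>, the relation gives
  \<open>A l \<le> A (l - 1)\<close>.\<close>

lemma cyclic_relation_eq_zero:
  fixes c :: "nat \<Rightarrow> 'a::linordered_idom"
  assumes l: "1 \<le> l" and rel: "\<And>j. j < n \<Longrightarrow> c j * l = c (cyc_pred n j) * (l - 1)"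
    and "i < n"
  shows "c i = 0"
proof -
  define A where "A = Max ((\<lambda>j. \<bar>c j\<bar>) ` {..<n})"
  have A_ge: "\<bar>c j\<bar> \<le> A" if "j < n" for j
    unfolding A_def using that by (intro Max_ge) auto
  have "A \<in> (\<lambda>j. \<bar>c j\<bar>) ` {..<n}"
    unfolding A_def using \<open>i < n\<close> by (intro Max_in) auto
  then obtain j where j: "j < n" "\<bar>c j\<bar> = A"
    by auto
  have "A * l = \<bar>c (cyc_pred n j)\<bar> * (l - 1)"
    using arg_cong[OF rel[OF j(1)], of abs] j l by (simp add: abs_mult)
  also have "\<dots> \<le> A * (l - 1)"
    using A_ge cyc_pred_less[OF j(1)] l by (intro mult_right_mono) auto
  finally have "A \<le> 0"
    by (simp add: algebra_simps)
  then show "c i = 0"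
    using A_ge[OF \<open>i < n\<close>] by simp
qed

lemma is_lattice_chair_lattice:
  assumes "2 \<le> n" "1 \<le> l"
  shows "is_lattice n (range (chair_lattice_point n l))"
  unfolding is_lattice_def
proof (intro exI[of _ "chair_generator n l"] conjI allI impI)
  fix c :: "nat \<Rightarrow> real" and i
  assume "\<forall>j<n. (\<Sum>i<n. c i * real_of_int (chair_generator n l i ! j)) = 0" "i < n"
  then show "c i = 0"
    using assms sum_chair_generator[OF assms(1), of _ c l]
    by (intro cyclic_relation_eq_zero[of "real_of_int l" n c]) auto
qed (use chair_lattice_eq[OF assms(1), of l] in \<open>simp_all add: length_chair_generator\<close>)

lemma chair_replicate:
  "chair n (replicate n l) (replicate n (l - 1))
     = {x. length x = n \<and> (\<forall>i<n. 0 \<le> x ! i \<and> x ! i < l) \<and> (\<exists>j<n. x ! j = 0)}"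
  unfolding chair_def by (auto; force)

lemma cyclic_difference_nonpos:
  fixes d e :: "nat \<Rightarrow> int"
  assumes l: "1 \<le> l"
    and e: "\<And>j. j < n \<Longrightarrow> e j = l * d j - (l - 1) * d (cyc_pred n j)"
    and e_less: "\<And>j. j < n \<Longrightarrow> e j < l"
    and "j0 < n" "e j0 \<le> 0" "j < n"
  shows "d j \<le> 0"
proof (rule ccontr)
  assume "\<not> d j \<le> 0"
  define M where "M = Max (d ` {..<n})"
  have M_ge: "d i \<le> M" if "i < n" for i
    unfolding M_def using that by (intro Max_ge) auto
  have "M \<in> d ` {..<n}"
    unfolding M_def using \<open>j < n\<close> by (intro Max_in) auto
  then obtain i0 where i0: "i0 < n" "d i0 = M"
    by auto
  have "0 < M"
    using M_ge[OF \<open>j < n\<close>] \<open>\<not> d j \<le> 0\<close> by simp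
  have "d (cyc_pred n i) = M" if "i < n" "d i = M" for i
  proof -
    have "l * (M - 1) < (l - 1) * d (cyc_pred n i)"
      using e[OF \<open>i < n\<close>] e_less[OF \<open>i < n\<close>] \<open>d i = M\<close> by (simp add: algebra_simps)
    moreover have "(l - 1) * (M - 1) \<le> l * (M - 1)"
      using \<open>0 < M\<close> by (simp add: algebra_simps)
    ultimately have "(l - 1) * (M - 1) < (l - 1) * d (cyc_pred n i)"
      by linarith
    then have "M - 1 < d (cyc_pred n i)"
      using l by (simp add: mult_less_cancel_left)
    then show ?thesis
      using M_ge[OF cyc_pred_less[OF \<open>i < n\<close>]] by simp
  qed
  then have "d i = M" if "i < n" for i
    using cyc_pred_invariant[of n "\<lambda>i. d i = M", OF _ i0 that] by blast
  then have "e j0 = M"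
    using e[OF \<open>j0 < n\<close>] cyc_pred_less[OF \<open>j0 < n\<close>] \<open>j0 < n\<close> by (simp add: algebra_simps)
  with \<open>e j0 \<le> 0\<close> \<open>0 < M\<close> show False
    by simp
qed

lemma chair_translates_meet_eq:
  assumes "1 \<le> l"
    and "translate (chair_lattice_point n l z) (chair n (replicate n l) (replicate n (l - 1)))
         \<inter> translate (chair_lattice_point n l z') (chair n (replicate n l) (replicate n (l - 1)))
         \<noteq> {}"
  shows "chair_lattice_point n l z = chair_lattice_point n l z'"
proof -
  obtain s t where s: "s \<in> chair n (replicate n l) (replicate n (l - 1))"
    and t: "t \<in> chair n (replicate n l) (replicate n (l - 1))"
    and eq: "map2 (+) (chair_lattice_point n l z) s = map2 (+) (chair_lattice_point n l z') t"
    using assms(2) unfolding translate_def by auto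
  define d where "d i = z' i - z i" for i
  have s_t: "length s = n" "length t = n" "\<And>j. j < n \<Longrightarrow> 0 \<le> s ! j \<and> s ! j < l"
    "\<And>j. j < n \<Longrightarrow> 0 \<le> t ! j \<and> t ! j < l" "\<exists>j<n. s ! j = 0" "\<exists>j<n. t ! j = 0"
    using s t by (auto simp: chair_replicate)
  have diff: "s ! j - t ! j = l * d j - (l - 1) * d (cyc_pred n j)" if "j < n" for j
    using arg_cong[OF eq, of "\<lambda>x. x ! j"] that s_t by (simp add: d_def algebra_simps)
  obtain j1 where "j1 < n" "s ! j1 = 0"
    using s_t by blast
  obtain j2 where "j2 < n" "t ! j2 = 0"
    using s_t by blast
  have less: "s ! j - t ! j < l" "t ! j - s ! j < l" if "j < n" for j
    using s_t(3,4)[OF that] by auto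
  have diff': "t ! j - s ! j = l * (- d j) - (l - 1) * (- d (cyc_pred n j))" if "j < n" for j
    using diff[OF that] by (simp add: algebra_simps)
  have "d j \<le> 0" if "j < n" for j
    by (rule cyclic_difference_nonpos[where e = "\<lambda>j. s ! j - t ! j" and d = d,
          OF assms(1) diff less(1) \<open>j1 < n\<close>])
      (use \<open>s ! j1 = 0\<close> s_t(4)[OF \<open>j1 < n\<close>] that in simp_all)
  moreover have "- d j \<le> 0" if "j < n" for j
    by (rule cyclic_difference_nonpos[where e = "\<lambda>j. t ! j - s ! j" and d = "\<lambda>j. - d j",
          OF assms(1) diff' less(2) \<open>j2 < n\<close>])
      (use \<open>t ! j2 = 0\<close> s_t(3)[OF \<open>j2 < n\<close>] that in simp_all)
  ultimately have "d j = 0" if "j < n" for j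
    using that by force
  then show ?thesis
    by (intro nth_equalityI) (auto simp: d_def cyc_pred_less)
qed

lemma obtain_int_maximizer:
  fixes f :: "'a \<Rightarrow> int"
  assumes "P a" and bounded: "\<And>c. P c \<Longrightarrow> f c \<le> B"
  obtains c where "P c" "\<And>c'. P c' \<Longrightarrow> f c' \<le> f c"
proof -
  let ?V = "f ` Collect P \<inter> {f a..B}"
  have "Max ?V \<in> ?V"
    using assms by (intro Max_in) auto
  then obtain c where "P c" "f c = Max ?V"
    by auto
  moreover have "f c' \<le> Max ?V" if "P c'" for c'
  proof (cases "f a \<le> f c'")
    case True
    with that bounded show ?thesis
      by (intro Max_ge) auto
  next
    case False
    moreover have "f a \<le> Max ?V"
      using assms by (intro Max_ge) auto
    ultimately show ?thesis
      by simp
  qed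
  ultimately show ?thesis
    using that by metis
qed

lemma sum_chair_lattice_point:
  assumes "0 < n"
  shows "(\<Sum>j<n. chair_lattice_point n l z ! j) = (\<Sum>j<n. z j)"
proof -
  have "(\<Sum>j<n. chair_lattice_point n l z ! j) = (\<Sum>j<n. l * z j - (l - 1) * z (cyc_pred n j))"
    by (intro sum.cong) auto
  also have "\<dots> = l * (\<Sum>j<n. z j) - (l - 1) * (\<Sum>j<n. z (cyc_pred n j))"
    by (simp add: sum_subtractf sum_distrib_left)
  finally show ?thesis
    by (simp add: sum_cyc_pred[OF assms] algebra_simps)
qed

text \<open>Raising \<open>z\<^sub>i\<close> by one raises coordinate \<open>i\<close> of the lattice point by \<open>l\<close>, lowers
  coordinate \<open>i + 1\<close> by \<open>l - 1\<close> and leaves the others unchanged.\<close>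

lemma chair_lattice_point_raise_le:
  assumes "2 \<le> n" "1 \<le> l" "k < n"
  shows "chair_lattice_point n l (z(i := z i + 1)) ! k
           \<le> chair_lattice_point n l z ! k + (if k = i then l else 0)"
  using assms cyc_pred_neq[OF assms(1,3)] by (auto simp: algebra_simps)

lemma chair_remainder_of_maximal:
  assumes n: "2 \<le> n" and l: "1 \<le> l" and "length x = n"
    and below: "\<And>j. j < n \<Longrightarrow> chair_lattice_point n l c ! j \<le> x ! j"
    and maximal: "\<And>c'. (\<And>j. j < n \<Longrightarrow> chair_lattice_point n l c' ! j \<le> x ! j)
                     \<Longrightarrow> (\<Sum>j<n. c' j) \<le> (\<Sum>j<n. c j)"
  shows "map2 (-) x (chair_lattice_point n l c) \<in> chair n (replicate n l) (replicate n (l - 1))"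
proof -
  let ?r = "\<lambda>j. x ! j - chair_lattice_point n l c ! j"
  have less: "?r i < l" if "i < n" for i
  proof (rule ccontr)
    assume "\<not> ?r i < l"
    then have "chair_lattice_point n l (c(i := c i + 1)) ! k \<le> x ! k" if "k < n" for k
      using chair_lattice_point_raise_le[OF n l that, of c i] below[OF that] by (auto split: if_splits)
    from maximal[OF this] \<open>i < n\<close> show False
      by (simp add: sum.remove[of "{..<n}" i])
  qed
  have zero: "\<exists>j<n. ?r j = 0"
  proof (rule ccontr)
    assume "\<not> (\<exists>j<n. ?r j = 0)"
    then have "chair_lattice_point n l (\<lambda>k. c k + 1) ! j \<le> x ! j" if "j < n" for j
      using below[OF that] that by (force simp: algebra_simps)
    from maximal[OF this] n show False
      by (simp add: sum.distrib)
  qed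
  show ?thesis
    using less zero below \<open>length x = n\<close> by (auto simp: chair_replicate)
qed

lemma chair_translates_cover:
  assumes n: "2 \<le> n" and l: "1 \<le> l" and "length x = n"
  shows "\<exists>z. x \<in> translate (chair_lattice_point n l z) (chair n (replicate n l) (replicate n (l - 1)))"
proof -
  let ?below = "\<lambda>c. \<forall>j<n. chair_lattice_point n l c ! j \<le> x ! j"
  define M where "M = (\<Sum>j<n. \<bar>x ! j\<bar>)"
  have "\<bar>x ! j\<bar> \<le> M" if "j < n" for j
    unfolding M_def using that by (intro member_le_sum) auto
  then have "?below (\<lambda>_. - M)"
    by (force simp: algebra_simps abs_le_iff)
  moreover have "(\<Sum>j<n. c j) \<le> (\<Sum>j<n. x ! j)" if "?below c" for c
    using sum_mono[of "{..<n}" "\<lambda>j. chair_lattice_point n l c ! j" "\<lambda>j. x ! j"] that n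
      sum_chair_lattice_point[of n l c] by simp
  ultimately obtain c where "?below c" and "\<And>c'. ?below c' \<Longrightarrow> (\<Sum>j<n. c' j) \<le> (\<Sum>j<n. c j)"
    using obtain_int_maximizer[of ?below "\<lambda>_. - M" "\<lambda>c. \<Sum>j<n. c j"] by blast
  then have "map2 (-) x (chair_lattice_point n l c) \<in> chair n (replicate n l) (replicate n (l - 1))"
    using chair_remainder_of_maximal[OF n l \<open>length x = n\<close>] by blast
  moreover have "x = map2 (+) (chair_lattice_point n l c) (map2 (-) x (chair_lattice_point n l c))"
    using \<open>length x = n\<close> by (intro nth_equalityI) auto
  ultimately show ?thesis
    unfolding translate_def by blast
qed

theorem mainTheorem8:
  fixes n :: nat and l :: int
  assumes "n \<ge> 2" and "l \<ge> 2"
  shows "\<exists>\<Lambda>. lattice_tiling n \<Lambda> (chair n (replicate n l) (replicate n (l - 1)))"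
proof -
  let ?S = "chair n (replicate n l) (replicate n (l - 1))"
  have l: "1 \<le> l"
    using assms(2) by simp
  have "translate X ?S \<inter> translate Y ?S = {}"
    if "X \<in> range (chair_lattice_point n l)" "Y \<in> range (chair_lattice_point n l)" "X \<noteq> Y" for X Y
    using that chair_translates_meet_eq[OF l] by blast
  moreover have "(\<Union>X\<in>range (chair_lattice_point n l). translate X ?S) = int_space n"
    using chair_translates_cover[OF assms(1) l]
    by (auto simp: int_space_def translate_def chair_replicate)
  ultimately show ?thesis
    unfolding lattice_tiling_def using is_lattice_chair_lattice[OF assms(1) l] by blast
qed

end
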